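(* Let $0<n<m$ be real numbers, $N\ge 2$ an integer, and let $V(r)=-\frac{c_n}{r^n}+\frac{c_m}{r^m}$ for $r>0$, where $c_n,c_m>0$ are chosen so that $V$ attains its minimum at $a=\frac1N$. Let $\kappa=V''(a)$ and $f>0$, and consider \[ U(z_1,\dots,z_{N-1})=\sum_{k=1}^{N-1}V(z_k-z_{k-1})-f\,z_{N-1},\qquad z_0=0, \] on the set $0=z_0<z_1<\dots<z_{N-1}$. Call a fixed point a configuration in this set at which $\partial U/\partial z_k=0$ for all $k=1,\dots,N-1$ (i.e. an equilibrium, with zero momenta, of the Hamiltonian $H=\sum_{k=1}^{N-1}\frac{p_k^2}{2m_0}+U$ for any particle mass $m_0>0$). Then a fixed point exists if and only if \[ \sigma:=\frac{f}{\kappa}\le \frac{C}{N},\qquad C=C(n,m)=\frac{1}{m-n}\left(\Bigl(\frac{m+1}{n+1}\Bigr)^{-\frac{n+1}{m-n}}-\Bigl(\frac{m+1}{n+1}\Bigr)^{-\frac{m+1}{m-n}}\right). \] *)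

theory Defs
  imports "HOL-Analysis.Analysis"
begin

definition LJV :: "real \<Rightarrow> real \<Rightarrow> real \<Rightarrow> real \<Rightarrow> real \<Rightarrow> real" where
  "LJV n m cn cm r = - cn / (r powr n) + cm / (r powr m)"

text \<open>Potential energy U(z_1,...,z_{N-1}) = sum_{k=1}^{N-1} V(z_k - z_{k-1}) - f z_{N-1}, with z_0 = 0.
  Configurations are represented as functions nat => real; only the values at 0..N-1 matter.\<close>
definition chainU :: "(real \<Rightarrow> real) \<Rightarrow> nat \<Rightarrow> real \<Rightarrow> (nat \<Rightarrow> real) \<Rightarrow> real" where
  "chainU V N f z = (\<Sum>k = 1..N - 1. V (z k - z (k - 1))) - f * z (N - 1)"

definition chain_config :: "nat \<Rightarrow> (nat \<Rightarrow> real) \<Rightarrow> bool" where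
  "chain_config N z \<longleftrightarrow> z 0 = 0 \<and> (\<forall>k \<in> {1..N - 1}. z (k - 1) < z k)"

definition chain_fixed_point :: "(real \<Rightarrow> real) \<Rightarrow> nat \<Rightarrow> real \<Rightarrow> (nat \<Rightarrow> real) \<Rightarrow> bool" where
  "chain_fixed_point V N f z \<longleftrightarrow> chain_config N z \<and>
     (\<forall>k \<in> {1..N - 1}. ((\<lambda>t. chainU V N f (z(k := t))) has_real_derivative 0) (at (z k)))"

definition Cnm :: "real \<Rightarrow> real \<Rightarrow> real" where
  "Cnm n m = 1 / (m - n) * (((m + 1) / (n + 1)) powr (- (n + 1) / (m - n))
                           - ((m + 1) / (n + 1)) powr (- (m + 1) / (m - n)))"

end

theory Submission
  imports Defs
begin

text \<open>Differentiating \<open>U\<close> in the last coordinate shows that at a fixed point the last bond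
  carries the tension \<open>V'(r) = f\<close>; conversely, equally spaced particles at such a bond length \<open>r\<close>
  are in equilibrium, since every bond then transmits the same tension. As \<open>V'(a) = 0\<close>, the
  tension is \<open>V'(r) = K ((a/r)^(n+1) - (a/r)^(m+1))\<close> with \<open>K = n c_n a^(-n-1)\<close>, and
  \<open>V''(a) = K (m - n) / a\<close>. By weighted AM-GM and the intermediate value theorem,
  \<open>u^(n+1) - u^(m+1)\<close> takes on \<open>(0,\<infinity>)\<close> exactly the values up to \<open>(m - n) C\<close>, so the tension \<open>f\<close>
  is attained iff \<open>f \<le> K (m - n) C = a \<kappa> C = \<kappa> C / N\<close>.\<close>

lemma chainU_partial_derivative:
  fixes V V' :: "real \<Rightarrow> real" and z :: "nat \<Rightarrow> real"
  assumes dV: "\<And>r. r > 0 \<Longrightarrow> (V has_real_derivative V' r) (at r)"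
    and cfg: "chain_config N z" and k: "k \<in> {1..N - 1}"
  shows "((\<lambda>t. chainU V N f (z(k := t))) has_real_derivative
           V' (z k - z (k - 1)) - (if k < N - 1 then V' (z (Suc k) - z k) else f)) (at (z k))"
proof -
  define \<delta> :: "nat \<Rightarrow> real" where "\<delta> j = (if j = k then 1 else 0)" for j
  have upd_deriv: "((\<lambda>t. (z(k := t)) j) has_real_derivative \<delta> j) (at (z k))" for j
    by (cases "j = k") (auto simp: \<delta>_def intro!: derivative_eq_intros)
  have bond_deriv: "((\<lambda>t. V ((z(k := t)) j - (z(k := t)) (j - 1))) has_real_derivative
                  V' (z j - z (j - 1)) * (\<delta> j - \<delta> (j - 1))) (at (z k))"
    if "j \<in> {1..N - 1}" for j
  proof -
    have "z (j - 1) < z j"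
      using cfg that by (auto simp: chain_config_def)
    then have "(V has_real_derivative V' (z j - z (j - 1)))
                 (at ((z(k := z k)) j - (z(k := z k)) (j - 1)))"
      by (simp add: dV)
    from DERIV_chain2[OF this DERIV_diff[OF upd_deriv upd_deriv]] show ?thesis .
  qed
  have sum_own_bond: "(\<Sum>j = 1..N - 1. V' (z j - z (j - 1)) * \<delta> j) = V' (z k - z (k - 1))"
    using k by (simp add: \<delta>_def if_distrib[of "(*) _"] sum.delta' cong: if_cong)
  have "(\<Sum>j = 1..N - 1. V' (z j - z (j - 1)) * \<delta> (j - 1))
        = (\<Sum>j = 1..N - 1. if j = Suc k then V' (z (Suc k) - z k) else 0)"
    using k by (intro sum.cong) (auto simp: \<delta>_def)
  also have "\<dots> = (if k < N - 1 then V' (z (Suc k) - z k) else 0)"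
    using k by (simp add: sum.delta)
  finally have sum_next_bond: "(\<Sum>j = 1..N - 1. V' (z j - z (j - 1)) * \<delta> (j - 1))
      = (if k < N - 1 then V' (z (Suc k) - z k) else 0)" .
  have "((\<lambda>t. chainU V N f (z(k := t))) has_real_derivative
          (\<Sum>j = 1..N - 1. V' (z j - z (j - 1)) * (\<delta> j - \<delta> (j - 1))) - f * \<delta> (N - 1))
          (at (z k))"
    unfolding chainU_def by (intro DERIV_diff DERIV_sum DERIV_cmult bond_deriv upd_deriv)
  moreover have "(\<Sum>j = 1..N - 1. V' (z j - z (j - 1)) * (\<delta> j - \<delta> (j - 1))) - f * \<delta> (N - 1)
      = V' (z k - z (k - 1)) - (if k < N - 1 then V' (z (Suc k) - z k) else f)"
    unfolding right_diff_distrib sum_subtractf sum_own_bond sum_next_bond using k by (auto simp: \<delta>_def)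
  ultimately show ?thesis
    by simp
qed

lemma chain_fixed_point_iff_tension:
  fixes V V' :: "real \<Rightarrow> real"
  assumes dV: "\<And>r. r > 0 \<Longrightarrow> (V has_real_derivative V' r) (at r)" and "N \<ge> 2"
  shows "(\<exists>z. chain_fixed_point V N f z) \<longleftrightarrow> (\<exists>r>0. V' r = f)"
proof
  assume "\<exists>z. chain_fixed_point V N f z"
  then obtain z where cfg: "chain_config N z"
    and crit: "\<forall>k \<in> {1..N - 1}. ((\<lambda>t. chainU V N f (z(k := t))) has_real_derivative 0) (at (z k))"
    unfolding chain_fixed_point_def by blast
  have last: "N - 1 \<in> {1..N - 1}"
    using \<open>N \<ge> 2\<close> by auto
  have "V' (z (N - 1) - z (N - 1 - 1)) = f"
    using DERIV_unique[OF chainU_partial_derivative[OF dV cfg last] crit[rule_format, OF last]]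
    by simp
  moreover have "z (N - 1 - 1) < z (N - 1)"
    using cfg last unfolding chain_config_def by blast
  ultimately show "\<exists>r>0. V' r = f"
    by (metis diff_gt_0_iff_gt)
next
  assume "\<exists>r>0. V' r = f"
  then obtain r where "r > 0" "V' r = f"
    by blast
  define z where "z j = real j * r" for j
  have cfg: "chain_config N z"
    using \<open>r > 0\<close> by (auto simp: chain_config_def z_def)
  have "((\<lambda>t. chainU V N f (z(k := t))) has_real_derivative 0) (at (z k))"
    if "k \<in> {1..N - 1}" for k
  proof -
    have "z k - z (k - 1) = r" "z (Suc k) - z k = r"
      using that by (simp_all add: z_def of_nat_diff algebra_simps)
    then have "V' (z k - z (k - 1)) - (if k < N - 1 then V' (z (Suc k) - z k) else f) = 0"
      using \<open>V' r = f\<close> by simp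
    with chainU_partial_derivative[OF dV cfg that, of f] show ?thesis
      by simp
  qed
  with cfg show "\<exists>z. chain_fixed_point V N f z"
    unfolding chain_fixed_point_def by blast
qed

lemma Cnm_maximizer:
  fixes n m :: real
  assumes "-1 < n" "n < m"
  defines "u \<equiv> ((m + 1) / (n + 1)) powr (-1 / (m - n))"
  shows "0 < u" "u \<le> 1" "u powr (m - n) = (n + 1) / (m + 1)"
    and "(m - n) * Cnm n m = u powr (n + 1) - u powr (m + 1)"
proof -
  define q where "q = (m + 1) / (n + 1)"
  have "q > 1"
    using assms(1,2) by (simp add: q_def)
  then show "0 < u"
    unfolding u_def q_def[symmetric] by simp
  show "u \<le> 1"
    unfolding u_def q_def[symmetric] using \<open>q > 1\<close> assms(1,2)
    by (intro less_imp_le powr_less_one) auto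
  have u_powr: "u powr e = q powr (- e / (m - n))" for e
    using assms(1,2) by (simp add: u_def q_def powr_powr)
  have "- (m - n) / (m - n) = -1"
    using assms(2) by (simp add: divide_eq_minus_1_iff)
  then have "u powr (m - n) = q powr -1"
    using u_powr[of "m - n"] by simp
  then show "u powr (m - n) = (n + 1) / (m + 1)"
    using assms(1,2) by (simp add: q_def powr_minus_divide)
  show "(m - n) * Cnm n m = u powr (n + 1) - u powr (m + 1)"
    using u_powr[of "n + 1"] u_powr[of "m + 1"] assms(1,2) by (simp add: Cnm_def q_def)
qed

lemma powr_diff_le_Cnm:
  fixes n m u :: real
  assumes "-1 < n" "n < m" "u > 0"
  shows "u powr (n + 1) - u powr (m + 1) \<le> (m - n) * Cnm n m"
proof -
  define u0 where "u0 = ((m + 1) / (n + 1)) powr (-1 / (m - n))"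
  note u0 = Cnm_maximizer[OF assms(1,2), folded u0_def]
  define p where "p = (n + 1) / (m + 1)"
  define w where "w = u / u0"
  have "0 \<le> p" "p \<le> 1"
    using assms by (auto simp: p_def)
  have "w > 0" and u: "u = u0 * w"
    using assms(3) u0(1) by (simp_all add: w_def)
  have "(w powr (m + 1)) powr p * 1 powr (1 - p) \<le> p * w powr (m + 1) + (1 - p) * 1"
    using \<open>0 \<le> p\<close> \<open>p \<le> 1\<close> \<open>w > 0\<close> by (intro Youngs_inequality_0) auto
  then have amgm: "w powr (n + 1) \<le> p * w powr (m + 1) + (1 - p)"
    using assms by (simp add: powr_powr p_def)
  have "u0 powr (m + 1) = u0 powr (n + 1 + (m - n))"
    by (simp add: add.commute)
  also have "\<dots> = u0 powr (n + 1) * u0 powr (m - n)"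
    by (rule powr_add)
  finally have u0_m: "u0 powr (m + 1) = p * u0 powr (n + 1)"
    using u0(3) by (simp add: p_def)
  have "u powr (n + 1) - u powr (m + 1)
        = u0 powr (n + 1) * w powr (n + 1) - u0 powr (m + 1) * w powr (m + 1)"
    using u0(1) \<open>w > 0\<close> by (simp add: u powr_mult)
  also have "\<dots> = u0 powr (n + 1) * (w powr (n + 1) - p * w powr (m + 1))"
    unfolding u0_m by (simp add: algebra_simps)
  also have "\<dots> \<le> u0 powr (n + 1) * (1 - p)"
    using amgm by (intro mult_left_mono) auto
  also have "\<dots> = (m - n) * Cnm n m"
    unfolding u0(4) u0_m by (simp add: algebra_simps)
  finally show ?thesis .
qed

lemma powr_diff_eq_solvable:
  fixes n m t :: real
  assumes "-1 < n" "n < m" "0 \<le> t" "t \<le> (m - n) * Cnm n m"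
  shows "\<exists>u>0. u powr (n + 1) - u powr (m + 1) = t"
proof -
  define u0 where "u0 = ((m + 1) / (n + 1)) powr (-1 / (m - n))"
  note u0 = Cnm_maximizer[OF assms(1,2), folded u0_def]
  have "\<exists>u. u0 \<le> u \<and> u \<le> 1 \<and> u powr (n + 1) - u powr (m + 1) = t"
  proof (rule IVT2')
    show "continuous_on {u0..1} (\<lambda>u. u powr (n + 1) - u powr (m + 1))"
      using u0 by (intro continuous_intros) auto
  qed (use assms u0 in auto)
  then obtain u where "u0 \<le> u" "u powr (n + 1) - u powr (m + 1) = t"
    by blast
  with \<open>0 < u0\<close> show ?thesis
    by (intro exI[of _ u]) auto
qed

lemma ex_powr_diff_eq_iff:
  fixes n m t :: real
  assumes "-1 < n" "n < m" "0 \<le> t"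
  shows "(\<exists>u>0. u powr (n + 1) - u powr (m + 1) = t) \<longleftrightarrow> t \<le> (m - n) * Cnm n m"
  using powr_diff_le_Cnm[OF assms(1,2)] powr_diff_eq_solvable[OF assms] by blast

definition LJV' :: "real \<Rightarrow> real \<Rightarrow> real \<Rightarrow> real \<Rightarrow> real \<Rightarrow> real" where
  "LJV' n m cn cm r = n * cn * r powr (- n - 1) - m * cm * r powr (- m - 1)"

definition LJV'' :: "real \<Rightarrow> real \<Rightarrow> real \<Rightarrow> real \<Rightarrow> real \<Rightarrow> real" where
  "LJV'' n m cn cm r = - (n + 1) * n * cn * r powr (- n - 2) + (m + 1) * m * cm * r powr (- m - 2)"

lemma has_real_derivative_LJV:
  assumes "r > 0"
  shows "(LJV n m cn cm has_real_derivative LJV' n m cn cm r) (at r)"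
proof -
  have "((\<lambda>r. - cn * r powr (- n) + cm * r powr (- m)) has_real_derivative LJV' n m cn cm r) (at r)"
    using assms by (auto intro!: derivative_eq_intros simp: LJV'_def algebra_simps)
  then show ?thesis
    by (rule has_field_derivative_transform_within_open[where S = "{0<..}"])
       (use assms in \<open>auto simp: LJV_def powr_minus_divide\<close>)
qed

lemma has_real_derivative_LJV':
  assumes "r > 0"
  shows "(LJV' n m cn cm has_real_derivative LJV'' n m cn cm r) (at r)"
  unfolding LJV'_def[abs_def]
  using assms by (auto intro!: derivative_eq_intros simp: LJV''_def algebra_simps)

lemma deriv2_LJV:
  assumes "r > 0"
  shows "deriv (deriv (LJV n m cn cm)) r = LJV'' n m cn cm r"
proof -
  have "(deriv (LJV n m cn cm) has_real_derivative LJV'' n m cn cm r) (at r)"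
    by (rule has_field_derivative_transform_within_open[OF has_real_derivative_LJV'[OF assms], where S = "{0<..}"])
       (use assms in \<open>auto intro!: DERIV_imp_deriv[symmetric] has_real_derivative_LJV\<close>)
  then show ?thesis
    by (rule DERIV_imp_deriv)
qed

lemma powr_rescale:
  fixes a r p :: real
  assumes "a > 0" "r > 0"
  shows "r powr (- p - 1) = a powr (- p - 1) * (a / r) powr (p + 1)"
proof -
  have "a powr (- p - 1) * a powr (p + 1) = 1" "r powr (- p - 1) * r powr (p + 1) = 1"
    using assms by (simp_all flip: powr_add)
  then show ?thesis
    using assms by (simp add: powr_divide field_simps)
qed

lemma LJV'_rescale:
  assumes "a > 0" "r > 0" "LJV' n m cn cm a = 0"
  shows "LJV' n m cn cm r = n * cn * a powr (- n - 1) * ((a / r) powr (n + 1) - (a / r) powr (m + 1))"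
proof -
  have "m * cm * a powr (- m - 1) = n * cn * a powr (- n - 1)"
    using assms(3) by (simp add: LJV'_def)
  then show ?thesis
    using assms(1,2) by (simp add: LJV'_def powr_rescale[of a r] algebra_simps)
qed

lemma LJV''_at_critical_point:
  assumes "a > 0" "LJV' n m cn cm a = 0"
  shows "LJV'' n m cn cm a = n * cn * a powr (- n - 1) * (m - n) / a"
proof -
  have "a powr (- p - 2) = a powr (- p - 1) / a" for p
  proof -
    have "- p - 2 = (- p - 1) - 1"
      by simp
    then show ?thesis
      using assms(1) by (simp only: powr_diff powr_one)
  qed
  then have "LJV'' n m cn cm a
      = (- (n + 1) * (n * cn * a powr (- n - 1)) + (m + 1) * (m * cm * a powr (- m - 1))) / a"
    by (simp add: LJV''_def add_divide_distrib)
  also have "m * cm * a powr (- m - 1) = n * cn * a powr (- n - 1)"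
    using assms(2) by (simp add: LJV'_def)
  finally show ?thesis
    by (simp add: algebra_simps)
qed

lemma ex_LJV'_eq_iff:
  assumes "-1 < n" "n < m" "a > 0" "LJV' n m cn cm a = 0" "n * cn > 0" "f \<ge> 0"
  shows "(\<exists>r>0. LJV' n m cn cm r = f) \<longleftrightarrow> f \<le> n * cn * a powr (- n - 1) * ((m - n) * Cnm n m)"
proof -
  define K where "K = n * cn * a powr (- n - 1)"
  have "K > 0"
    unfolding K_def using assms(3) by (intro mult_pos_pos[OF assms(5)]) simp
  define h where "h u = u powr (n + 1) - u powr (m + 1)" for u
  have "(\<exists>r>0. LJV' n m cn cm r = f) \<longleftrightarrow> (\<exists>u>0. K * h u = f)"
  proof
    assume "\<exists>r>0. LJV' n m cn cm r = f"
    then obtain r where "r > 0" "LJV' n m cn cm r = f"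
      by blast
    moreover have "LJV' n m cn cm r = K * h (a / r)"
      using LJV'_rescale[OF assms(3) \<open>r > 0\<close> assms(4)] by (simp add: K_def h_def)
    ultimately show "\<exists>u>0. K * h u = f"
      using assms(3) by (intro exI[of _ "a / r"]) simp
  next
    assume "\<exists>u>0. K * h u = f"
    then obtain u where "u > 0" "K * h u = f"
      by blast
    moreover have "LJV' n m cn cm (a / u) = K * h u"
      using LJV'_rescale[of a "a / u", OF assms(3) _ assms(4)] assms(3) \<open>u > 0\<close>
      by (simp add: K_def h_def)
    ultimately show "\<exists>r>0. LJV' n m cn cm r = f"
      using assms(3) by (intro exI[of _ "a / u"]) simp
  qed
  also have "\<dots> \<longleftrightarrow> (\<exists>u>0. h u = f / K)"
    using \<open>K > 0\<close> by (simp add: eq_divide_eq mult.commute)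
  also have "\<dots> \<longleftrightarrow> f / K \<le> (m - n) * Cnm n m"
    unfolding h_def using assms(1,2,6) \<open>K > 0\<close> by (intro ex_powr_diff_eq_iff) auto
  also have "\<dots> \<longleftrightarrow> f \<le> K * ((m - n) * Cnm n m)"
    using \<open>K > 0\<close> by (simp add: pos_divide_le_eq mult.commute)
  finally show ?thesis
    unfolding K_def .
qed

theorem lemma1:
  fixes n m cn cm f :: real and N :: nat
  assumes "0 < n" and "n < m" and "N \<ge> 2"
    and "cn > 0" and "cm > 0"
    and "\<forall>r > 0. LJV n m cn cm (1 / real N) \<le> LJV n m cn cm r"
    and "f > 0"
  shows "(\<exists>z. chain_fixed_point (LJV n m cn cm) N f z) \<longleftrightarrow>
         f / deriv (deriv (LJV n m cn cm)) (1 / real N) \<le> Cnm n m / real N"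
proof -
  define a where "a = 1 / real N"
  have "a > 0"
    using assms(3) by (simp add: a_def)
  have crit: "LJV' n m cn cm a = 0"
  proof (rule DERIV_local_min[OF has_real_derivative_LJV[OF \<open>a > 0\<close>] \<open>a > 0\<close>])
    show "\<forall>y. \<bar>a - y\<bar> < a \<longrightarrow> LJV n m cn cm a \<le> LJV n m cn cm y"
      using assms(6) by (auto simp: a_def)
  qed
  define K where "K = n * cn * a powr (- n - 1)"
  have "K > 0"
    unfolding K_def using assms(1,4) \<open>a > 0\<close> by (intro mult_pos_pos) simp_all
  have stiffness: "deriv (deriv (LJV n m cn cm)) (1 / real N) = K * (m - n) / a"
    using deriv2_LJV[OF \<open>a > 0\<close>] LJV''_at_critical_point[OF \<open>a > 0\<close> crit]
    by (simp add: a_def [symmetric] K_def)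
  have "(\<exists>z. chain_fixed_point (LJV n m cn cm) N f z) \<longleftrightarrow> (\<exists>r>0. LJV' n m cn cm r = f)"
    using has_real_derivative_LJV assms(3) by (rule chain_fixed_point_iff_tension)
  also have "\<dots> \<longleftrightarrow> f \<le> K * ((m - n) * Cnm n m)"
    unfolding K_def using assms \<open>a > 0\<close> crit by (intro ex_LJV'_eq_iff) auto
  also have "\<dots> \<longleftrightarrow> a * (f / (K * (m - n))) \<le> a * Cnm n m"
    using \<open>K > 0\<close> \<open>a > 0\<close> assms(2) by (simp add: pos_divide_le_eq mult.commute)
  also have "\<dots> \<longleftrightarrow> f / (K * (m - n) / a) \<le> Cnm n m / real N"
    by (simp add: a_def mult.commute)
  finally show ?thesis
    unfolding stiffness .
qed

end
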